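(* Suppose that $A$ is normally elliptic with ellipticity constant $\kappa$ and symbol $a$ of order $m$. Then there exist $\varphi, \gamma, \omega, M > 0$ such that for all $\xi \in \mathbb{R}^d$ and all $\lambda \in \Sigma_{\varphi,-\gamma\lvert \xi \rvert^m + \omega}$ the operator $\lambda+a(\xi)$ is invertible and \[ \lVert (\lambda + a(\xi))^{-1} \rVert \leq \frac{M}{\lvert \xi \rvert^m + \lvert\lambda + \gamma\lvert \xi\rvert^m \rvert} . \] The parameters $\varphi, \gamma$ depend only on $a_m$, while $\omega$ depends on $a_m$ and $N_0(a-a_m)$. Moreover, one can choose $M = 4\kappa +2$.
   Context: Let $X$ be a Banach space, $d,m\in\mathbb{N}$, and $a(\xi)=\sum_{\lvert\alpha\rvert\le m}a_\alpha\xi^\alpha$ with $a_\alpha\in\mathcal{L}(X)$ and $a_\alpha\neq0$ for some $\lvert\alpha\rvert=m$; $a_m(\xi)=\sum_{\lvert\alpha\rvert=m}a_\alpha\xi^\alpha$ is its principal symbol and $A=a(D)$. For $\vartheta\in[0,\pi)$, $\omega\in\mathbb{R}$: $\Sigma_{\vartheta,\omega}=\{z\in\mathbb{C}:\lvert\arg(z-\omega)\rvert\le\vartheta\}\cup\{0\}$. $A$ is $(\kappa,\vartheta,\omega)$-elliptic ($\kappa\ge1$) if for all $\lvert\xi\rvert=1$ the resolvent set of $-a_m(\xi)$ contains $\Sigma_{\vartheta,\omega}$ and $\lVert(\lambda+a_m(\xi))^{-1}\rVert\le\kappa/(1+\lvert\lambda-\omega\rvert)$ for $\lambda\in\Sigma_{\vartheta,\omega}$;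 normally elliptic with ellipticity constant $\kappa$ means $(\kappa,\pi/2,0)$-elliptic. For an $\mathcal{L}(X)$-valued polynomial $p$ of degree $n$ and a multi-index $\alpha$, $N_\alpha(p)=\max_{\beta\le\alpha}\sup_{\xi\in\mathbb{R}^d}\lVert\partial^\beta p(\xi)\rVert/(1+\lvert\xi\rvert)^{n-\lvert\beta\rvert}$ (componentwise order on multi-indices); here $a-a_m$ is regarded as a polynomial of degree $m-1$. *)

theory Defs
  imports "HOL-Analysis.Analysis"
begin

text \<open>A complex Banach space X is encoded as a
  real Banach space 'a together with a bounded operator J (multiplication by i) with
  J J = -1 and norm (a x + b J x) = |a + i b| norm x, so that scalar multiplication
  (a + i b) x := a x + b J x makes 'a a complex normed (Banach) space.\<close>

definition complex_structure :: "('a::real_normed_vector \<Rightarrow>\<^sub>L 'a) \<Rightarrow> bool" where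
  "complex_structure J \<longleftrightarrow> J o\<^sub>L J = - id_blinfun \<and>
     (\<forall>a b x. norm (a *\<^sub>R x + b *\<^sub>R blinfun_apply J x) = cmod (Complex a b) * norm x)"

definition cmult :: "('a::real_normed_vector \<Rightarrow>\<^sub>L 'a) \<Rightarrow> complex \<Rightarrow> 'a \<Rightarrow> 'a" where
  "cmult J c x = Re c *\<^sub>R x + Im c *\<^sub>R blinfun_apply J x"

text \<open>Elements of L(X): bounded real-linear operators which are complex linear.\<close>
definition clin_op :: "('a::real_normed_vector \<Rightarrow>\<^sub>L 'a) \<Rightarrow> ('a \<Rightarrow>\<^sub>L 'a) \<Rightarrow> bool" where
  "clin_op J T \<longleftrightarrow> (\<forall>c x. blinfun_apply T (cmult J c x) = cmult J c (blinfun_apply T x))"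

definition cscal :: "('a::real_normed_vector \<Rightarrow>\<^sub>L 'a) \<Rightarrow> complex \<Rightarrow> ('a \<Rightarrow>\<^sub>L 'a)" where
  "cscal J c = Re c *\<^sub>R id_blinfun + Im c *\<^sub>R J"

definition is_inverse_op :: "('a::real_normed_vector \<Rightarrow>\<^sub>L 'a) \<Rightarrow> ('a \<Rightarrow>\<^sub>L 'a) \<Rightarrow> bool" where
  "is_inverse_op S T \<longleftrightarrow> S o\<^sub>L T = id_blinfun \<and> T o\<^sub>L S = id_blinfun"

text \<open>Sector Sigma_{theta,omega}, vertex omega included (Arg 0 = 0).\<close>
definition sector :: "real \<Rightarrow> real \<Rightarrow> complex set" where
  "sector \<theta> \<omega> = {z. \<bar>Arg (z - complex_of_real \<omega>)\<bar> \<le> \<theta>}"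

definition mi_abs :: "('d::finite \<Rightarrow> nat) \<Rightarrow> nat" where
  "mi_abs \<alpha> = (\<Sum>i\<in>UNIV. \<alpha> i)"

definition mono_pow :: "real^'d \<Rightarrow> ('d::finite \<Rightarrow> nat) \<Rightarrow> real" where
  "mono_pow \<xi> \<alpha> = (\<Prod>i\<in>UNIV. (\<xi> $ i) ^ \<alpha> i)"

definition symb :: "nat \<Rightarrow> (('d::finite \<Rightarrow> nat) \<Rightarrow> ('a::real_normed_vector \<Rightarrow>\<^sub>L 'a)) \<Rightarrow> real^'d \<Rightarrow> ('a \<Rightarrow>\<^sub>L 'a)" where
  "symb n c \<xi> = (\<Sum>\<alpha>\<in>{\<alpha>. mi_abs \<alpha> \<le> n}. mono_pow \<xi> \<alpha> *\<^sub>R c \<alpha>)"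

definition N0 :: "nat \<Rightarrow> (real^'d::finite \<Rightarrow> ('a::real_normed_vector \<Rightarrow>\<^sub>L 'a)) \<Rightarrow> real" where
  "N0 n p = (SUP \<xi>. norm (p \<xi>) / (1 + norm \<xi>) ^ n)"

definition elliptic :: "('a::real_normed_vector \<Rightarrow>\<^sub>L 'a) \<Rightarrow> real \<Rightarrow> real \<Rightarrow> real \<Rightarrow> nat \<Rightarrow> (('d::finite \<Rightarrow> nat) \<Rightarrow> ('a \<Rightarrow>\<^sub>L 'a)) \<Rightarrow> bool" where
  "elliptic J \<kappa> \<theta> \<omega> m p \<longleftrightarrow> \<kappa> \<ge> 1 \<and>
     (\<forall>\<xi>::real^'d. norm \<xi> = 1 \<longrightarrow> (\<forall>z\<in>sector \<theta> \<omega>.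
        \<exists>S. is_inverse_op S (cscal J z + symb m p \<xi>) \<and>
            norm S \<le> \<kappa> / (1 + cmod (z - complex_of_real \<omega>))))"

definition normally_elliptic :: "('a::real_normed_vector \<Rightarrow>\<^sub>L 'a) \<Rightarrow> real \<Rightarrow> nat \<Rightarrow> (('d::finite \<Rightarrow> nat) \<Rightarrow> ('a \<Rightarrow>\<^sub>L 'a)) \<Rightarrow> bool" where
  "normally_elliptic J \<kappa> m p \<longleftrightarrow> elliptic J \<kappa> (pi/2) 0 m p"

end

theory Submission
  imports Defs
begin

text \<open>On the closed right half-plane the resolvent of the principal symbol follows from
  ellipticity on the unit sphere by homogeneity: its norm is at most
  \<open>\<kappa> / (\<bar>\<xi>\<bar>\<^sup>m + \<bar>\<lambda>\<bar>)\<close>. Moving the spectral parameter to the left by at most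
  \<open>\<gamma> \<bar>\<xi>\<bar>\<^sup>m\<close> with \<open>\<gamma> = 1 / (8 \<kappa>)\<close> is a perturbation of relative size \<open>1/8\<close>, and the
  lower-order part, of norm at most \<open>N\<^sub>0(a - a\<^sub>m) (1 + \<bar>\<xi>\<bar>)\<^sup>m\<^sup>-\<^sup>1\<close>, is a perturbation of
  relative size \<open>1/2\<close> once \<open>\<omega>\<close> is so large that
  \<open>4 \<kappa> N\<^sub>0(a - a\<^sub>m) (1 + r)\<^sup>m\<^sup>-\<^sup>1 \<le> r\<^sup>m + \<omega>\<close>. Both are absorbed by Neumann series, so the
  angle \<open>\<phi> = \<pi>/2\<close> works and even \<open>M = 4 \<kappa>\<close>.
  The inverses are built among real-linear operators.\<close>

lemma is_inverse_opD:
  assumes "is_inverse_op S T"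
  shows "S (T x) = x" and "T (S x) = x"
  using assms unfolding is_inverse_op_def
  by (metis blinfun_apply_blinfun_compose blinfun_apply_id_blinfun)+

lemma blinfun_compose_funpow_Suc:
  fixes K :: "'a::real_normed_vector \<Rightarrow>\<^sub>L 'a"
  shows "((\<lambda>X. K o\<^sub>L X) ^^ Suc n) id_blinfun = ((\<lambda>X. K o\<^sub>L X) ^^ n) id_blinfun o\<^sub>L K"
proof (induction n)
  case 0
  show ?case by (auto intro!: blinfun_eqI)
next
  case (Suc n)
  then have "((\<lambda>X. K o\<^sub>L X) ^^ Suc (Suc n)) id_blinfun
      = K o\<^sub>L (((\<lambda>X. K o\<^sub>L X) ^^ n) id_blinfun o\<^sub>L K)"
    by simp
  also have "\<dots> = ((\<lambda>X. K o\<^sub>L X) ^^ Suc n) id_blinfun o\<^sub>L K" by (auto intro!: blinfun_eqI)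
  finally show ?case .
qed

lemma norm_blinfun_compose_funpow_le:
  fixes K :: "'a::real_normed_vector \<Rightarrow>\<^sub>L 'a"
  shows "norm (((\<lambda>X. K o\<^sub>L X) ^^ n) id_blinfun) \<le> norm K ^ n"
proof (induction n)
  case 0
  show ?case using norm_blinfun_id_le by simp
next
  case (Suc n)
  have "norm (K o\<^sub>L ((\<lambda>X. K o\<^sub>L X) ^^ n) id_blinfun) \<le> norm K * norm (((\<lambda>X. K o\<^sub>L X) ^^ n) id_blinfun)"
    by (rule norm_blinfun_compose)
  also have "\<dots> \<le> norm K * norm K ^ n" using Suc by (simp add: mult_left_mono)
  finally show ?case by simp
qed

lemma neumann_series_inverse:
  fixes K :: "'a::banach \<Rightarrow>\<^sub>L 'a"
  assumes K: "norm K < 1"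
  shows "\<exists>S. is_inverse_op S (id_blinfun - K) \<and> norm S \<le> 1 / (1 - norm K)"
proof -
  define P where "P n = ((\<lambda>X. K o\<^sub>L X) ^^ n) id_blinfun" for n
  have P_0: "P 0 = id_blinfun" and P_Suc: "P (Suc n) = K o\<^sub>L P n" for n
    by (simp_all add: P_def)
  have P_Suc': "P (Suc n) = P n o\<^sub>L K" for n
    unfolding P_def by (rule blinfun_compose_funpow_Suc)
  have norm_P: "norm (P n) \<le> norm K ^ n" for n
    unfolding P_def by (rule norm_blinfun_compose_funpow_le)
  have geom: "summable (\<lambda>n. norm K ^ n)" using K by (simp add: summable_geometric)
  have sum_P: "summable P" by (rule summable_comparison_test'[OF geom norm_P])
  have sum_norm_P: "summable (\<lambda>n. norm (P n))"
    by (rule summable_comparison_test'[OF geom]) (use norm_P in auto)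
  define S where "S = suminf P"
  have "norm S \<le> (\<Sum>n. norm (P n))" unfolding S_def by (rule summable_norm[OF sum_norm_P])
  also have "\<dots> \<le> (\<Sum>n. norm K ^ n)" by (rule suminf_le[OF norm_P sum_norm_P geom])
  also have "\<dots> = 1 / (1 - norm K)" using K by (simp add: suminf_geometric)
  finally have norm_S: "norm S \<le> 1 / (1 - norm K)" .
  have tail: "(\<Sum>n. P (Suc n)) = S - id_blinfun"
    unfolding S_def using suminf_split_head[OF sum_P] P_0 by simp
  have "bounded_linear (\<lambda>X. K o\<^sub>L X)" and "bounded_linear (\<lambda>X. X o\<^sub>L K)"
    by (rule bounded_bilinear.bounded_linear_right bounded_bilinear.bounded_linear_left,
        rule bounded_bilinear_blinfun_compose)+
  note compose_suminf = this[THEN bounded_linear.suminf, OF sum_P]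
  have "K o\<^sub>L S = (\<Sum>n. P (Suc n))" unfolding S_def P_Suc by (rule compose_suminf(1))
  moreover have "S o\<^sub>L K = (\<Sum>n. P (Suc n))" unfolding S_def P_Suc' by (rule compose_suminf(2))
  moreover have "(id_blinfun - K) o\<^sub>L S = S - (K o\<^sub>L S)"
    and "S o\<^sub>L (id_blinfun - K) = S - (S o\<^sub>L K)"
    by (auto simp: blinfun.diff_left blinfun.diff_right intro!: blinfun_eqI)
  ultimately have left: "(id_blinfun - K) o\<^sub>L S = id_blinfun"
    and right: "S o\<^sub>L (id_blinfun - K) = id_blinfun"
    using tail by simp_all
  show ?thesis using left right norm_S unfolding is_inverse_op_def by blast
qed

lemma is_inverse_op_add_small:
  fixes T R B :: "'a::banach \<Rightarrow>\<^sub>L 'a"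
  assumes R: "is_inverse_op R T" and norm_R: "norm R \<le> \<rho>"
    and small: "norm B * \<rho> \<le> \<delta>" and "\<delta> < 1"
  shows "\<exists>S. is_inverse_op S (T + B) \<and> norm S \<le> \<rho> / (1 - \<delta>)"
proof -
  define K where "K = - (R o\<^sub>L B)"
  have "norm K \<le> norm R * norm B" unfolding K_def using norm_blinfun_compose by simp
  also have "\<dots> \<le> \<rho> * norm B" using norm_R by (simp add: mult_right_mono)
  finally have norm_K: "norm K \<le> \<delta>" using small by (simp add: mult.commute)
  with \<open>\<delta> < 1\<close> obtain S0 where S0: "is_inverse_op S0 (id_blinfun - K)"
    and norm_S0: "norm S0 \<le> 1 / (1 - norm K)"
    using neumann_series_inverse[of K] by auto
  have factor: "T + B = T o\<^sub>L (id_blinfun - K)"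
    by (rule blinfun_eqI)
      (simp add: K_def blinfun.diff_left blinfun.add_left blinfun.add_right is_inverse_opD[OF R])
  have "is_inverse_op (S0 o\<^sub>L R) (T + B)"
    unfolding is_inverse_op_def factor
    by (auto simp: is_inverse_opD[OF R] is_inverse_opD[OF S0] intro!: blinfun_eqI)
  moreover have "norm (S0 o\<^sub>L R) \<le> \<rho> / (1 - \<delta>)"
  proof -
    have "1 / (1 - norm K) \<le> 1 / (1 - \<delta>)"
      using norm_K \<open>\<delta> < 1\<close> by (intro divide_left_mono) auto
    then have "norm S0 * norm R \<le> 1 / (1 - \<delta>) * \<rho>"
      using norm_S0 norm_R \<open>\<delta> < 1\<close> by (intro mult_mono) auto
    then show ?thesis using norm_blinfun_compose[of S0 R] by simp
  qed
  ultimately show ?thesis by blast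
qed

lemma is_inverse_op_scaleR:
  assumes "is_inverse_op S T" and "c \<noteq> 0"
  shows "is_inverse_op ((1 / c) *\<^sub>R S) (c *\<^sub>R T)"
  unfolding is_inverse_op_def
  by (intro conjI; rule blinfun_eqI)
    (simp_all add: scaleR_blinfun.rep_eq blinfun.scaleR_right is_inverse_opD[OF assms(1)] assms(2))

lemma cscal_apply: "cscal J z x = Re z *\<^sub>R x + Im z *\<^sub>R J x"
  by (simp add: cscal_def plus_blinfun.rep_eq scaleR_blinfun.rep_eq)

lemma complex_structure_apply_apply:
  assumes "complex_structure J"
  shows "J (J x) = - x"
  using arg_cong[of _ _ "\<lambda>T. blinfun_apply T x", OF conjunct1[OF assms[unfolded complex_structure_def]]]
  by (simp add: uminus_blinfun.rep_eq)

lemma norm_cscal_le: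
  assumes "complex_structure J"
  shows "norm (cscal J z) \<le> cmod z"
proof (rule norm_blinfun_bound)
  show "norm (cscal J z x) \<le> cmod z * norm x" for x
    using assms unfolding complex_structure_def cscal_apply by (metis complex.collapse order_refl)
qed simp

lemma cscal_mult:
  assumes "complex_structure J"
  shows "cscal J z o\<^sub>L cscal J w = cscal J (z * w)"
  by (rule blinfun_eqI)
    (simp add: cscal_apply blinfun.add_right blinfun.scaleR_right
      complex_structure_apply_apply[OF assms] algebra_simps)

lemma is_inverse_op_cscal:
  assumes "complex_structure J" and "z \<noteq> 0"
  shows "is_inverse_op (cscal J (1 / z)) (cscal J z)"
  using assms by (simp add: is_inverse_op_def cscal_mult) (simp add: cscal_def)

lemma cscal_add: "cscal J (z + w) = cscal J z + cscal J w"
  by (simp add: cscal_def algebra_simps)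

lemma cscal_of_real: "cscal J (complex_of_real r) = r *\<^sub>R id_blinfun"
  by (simp add: cscal_def)

lemma cscal_divide_of_real: "cscal J (z / complex_of_real s) = (1 / s) *\<^sub>R cscal J z"
  by (rule blinfun_eqI)
    (simp only: cscal_apply scaleR_blinfun.rep_eq Re_divide_of_real Im_divide_of_real,
      simp add: algebra_simps divide_inverse)

lemma sector_pi_half_iff: "z \<in> sector (pi / 2) v \<longleftrightarrow> v \<le> Re z"
  unfolding sector_def using Arg_Re_nonneg[of "z - complex_of_real v"] by auto

lemma cmod_add_of_real_le:
  fixes w :: complex
  assumes "- c \<le> u" and "u \<le> 0"
  shows "cmod (w + complex_of_real (u + c)) \<le> cmod w + c"
proof -
  have "cmod (complex_of_real (u + c)) \<le> c" unfolding norm_of_real using assms by linarith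
  then show ?thesis by (rule order_trans[OF norm_triangle_ineq add_left_mono])
qed

lemma finite_mi_abs_le: "finite {\<alpha>::'d::finite \<Rightarrow> nat. mi_abs \<alpha> \<le> n}"
proof (rule finite_subset)
  have "\<alpha> i \<le> mi_abs \<alpha>" for \<alpha> :: "'d \<Rightarrow> nat" and i
    unfolding mi_abs_def by (rule member_le_sum) auto
  then show "{\<alpha>::'d \<Rightarrow> nat. mi_abs \<alpha> \<le> n} \<subseteq> Pi\<^sub>E UNIV (\<lambda>_. {..n})"
    by (auto intro: le_trans)
qed (auto intro: finite_PiE)

lemma mono_pow_scaleR: "mono_pow (r *\<^sub>R \<xi>) \<alpha> = r ^ mi_abs \<alpha> * mono_pow \<xi> \<alpha>"
  unfolding mono_pow_def mi_abs_def by (simp add: power_mult_distrib prod.distrib power_sum)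

lemma abs_mono_pow_le: "\<bar>mono_pow \<xi> \<alpha>\<bar> \<le> norm \<xi> ^ mi_abs \<alpha>"
proof -
  have "\<bar>mono_pow \<xi> \<alpha>\<bar> = (\<Prod>i\<in>UNIV. \<bar>\<xi> $ i\<bar> ^ \<alpha> i)"
    unfolding mono_pow_def by (simp add: abs_prod power_abs)
  also have "\<dots> \<le> (\<Prod>i\<in>UNIV. norm \<xi> ^ \<alpha> i)"
    by (intro prod_mono conjI power_mono component_le_norm_cart) auto
  also have "\<dots> = norm \<xi> ^ mi_abs \<alpha>" unfolding mi_abs_def by (simp add: power_sum)
  finally show ?thesis .
qed

lemma symb_scaleR_homogeneous:
  assumes "\<forall>\<alpha>. mi_abs \<alpha> \<noteq> m \<longrightarrow> p \<alpha> = 0"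
  shows "symb m p (r *\<^sub>R \<xi>) = r ^ m *\<^sub>R symb m p \<xi>"
proof -
  have "symb m p (r *\<^sub>R \<xi>) = (\<Sum>\<alpha>\<in>{\<alpha>. mi_abs \<alpha> \<le> m}. r ^ m *\<^sub>R (mono_pow \<xi> \<alpha> *\<^sub>R p \<alpha>))"
    unfolding symb_def using assms by (intro sum.cong) (auto simp: mono_pow_scaleR)
  then show ?thesis unfolding symb_def by (simp add: scaleR_sum_right)
qed

lemma symb_add_lower_order:
  assumes "m \<ge> 1" and "\<forall>\<alpha>. mi_abs \<alpha> \<ge> m \<longrightarrow> b \<alpha> = 0"
  shows "symb m (\<lambda>\<alpha>. p \<alpha> + b \<alpha>) \<xi> = symb m p \<xi> + symb (m - 1) b \<xi>"
proof -
  have "symb m b \<xi> = symb (m - 1) b \<xi>"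
    unfolding symb_def using assms
    by (intro sum.mono_neutral_right finite_mi_abs_le) auto
  then show ?thesis unfolding symb_def by (simp add: scaleR_add_right sum.distrib)
qed

lemma norm_symb_le:
  "norm (symb n b \<xi>) \<le> (\<Sum>\<alpha>\<in>{\<alpha>. mi_abs \<alpha> \<le> n}. norm (b \<alpha>)) * (1 + norm \<xi>) ^ n"
proof -
  have "\<bar>mono_pow \<xi> \<alpha>\<bar> \<le> (1 + norm \<xi>) ^ n" if "mi_abs \<alpha> \<le> n" for \<alpha>
  proof -
    have "\<bar>mono_pow \<xi> \<alpha>\<bar> \<le> norm \<xi> ^ mi_abs \<alpha>" by (rule abs_mono_pow_le)
    also have "\<dots> \<le> (1 + norm \<xi>) ^ mi_abs \<alpha>" by (intro power_mono) auto
    also have "\<dots> \<le> (1 + norm \<xi>) ^ n" using that by (intro power_increasing) auto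
    finally show ?thesis .
  qed
  then have "norm (mono_pow \<xi> \<alpha> *\<^sub>R b \<alpha>) \<le> norm (b \<alpha>) * (1 + norm \<xi>) ^ n"
    if "mi_abs \<alpha> \<le> n" for \<alpha>
    using that by (simp add: mult.commute[of "norm (b \<alpha>)"] mult_right_mono)
  then have "norm (symb n b \<xi>) \<le> (\<Sum>\<alpha>\<in>{\<alpha>. mi_abs \<alpha> \<le> n}. norm (b \<alpha>) * (1 + norm \<xi>) ^ n)"
    unfolding symb_def by (intro norm_sum[THEN order_trans] sum_mono) auto
  then show ?thesis by (simp add: sum_distrib_right)
qed

lemma norm_symb_le_N0: "norm (symb n b \<xi>) \<le> N0 n (symb n b) * (1 + norm \<xi>) ^ n"
proof -
  have pos: "(1 + norm x) ^ n > 0" for x :: "real^'d" by (simp add: add_pos_nonneg)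
  have "bdd_above (range (\<lambda>x. norm (symb n b x) / (1 + norm x) ^ n))"
  proof (rule bdd_aboveI2)
    show "norm (symb n b x) / (1 + norm x) ^ n \<le> (\<Sum>\<alpha>\<in>{\<alpha>. mi_abs \<alpha> \<le> n}. norm (b \<alpha>))" for x
      using norm_symb_le[of n b x] pos[of x] by (simp add: divide_le_eq)
  qed
  then have "norm (symb n b \<xi>) / (1 + norm \<xi>) ^ n \<le> N0 n (symb n b)"
    unfolding N0_def by (rule cSUP_upper[OF UNIV_I])
  then show ?thesis using pos[of \<xi>] by (simp add: divide_le_eq)
qed

lemma power_lower_degree_bound:
  fixes K :: real
  assumes "m \<ge> 1" and "K \<ge> 0"
  shows "\<exists>\<omega>>0. \<forall>r\<ge>0. K * (1 + r) ^ (m - 1) \<le> r ^ m + \<omega>"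
proof -
  define C where "C = 2 ^ (m - 1) * K + 1"
  have "0 \<le> 2 ^ (m - 1) * K" using assms by simp
  then have C: "1 \<le> C" "0 \<le> K * (1 + C) ^ (m - 1)" using assms by (simp_all add: C_def)
  have bound: "K * (1 + r) ^ (m - 1) \<le> r ^ m + K * (1 + C) ^ (m - 1)" if "r \<ge> 0" for r
  proof (cases "r \<le> C")
    case True
    then have "K * (1 + r) ^ (m - 1) \<le> K * (1 + C) ^ (m - 1)"
      using assms \<open>r \<ge> 0\<close> by (intro mult_left_mono power_mono) auto
    moreover have "0 \<le> r ^ m" using \<open>r \<ge> 0\<close> by simp
    ultimately show ?thesis by linarith
  next
    case False
    have "K * (1 + r) ^ (m - 1) \<le> K * (2 * r) ^ (m - 1)"
      using False C assms by (intro mult_left_mono power_mono) auto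
    also have "\<dots> = (2 ^ (m - 1) * K) * r ^ (m - 1)" by (simp add: power_mult_distrib)
    also have "\<dots> \<le> r * r ^ (m - 1)"
      using False \<open>r \<ge> 0\<close> by (intro mult_right_mono) (auto simp: C_def)
    also have "\<dots> = r ^ m" using \<open>m \<ge> 1\<close> by (simp add: power_eq_if)
    finally show ?thesis using C by linarith
  qed
  show ?thesis
  proof (intro exI[of _ "K * (1 + C) ^ (m - 1) + 1"] conjI allI impI)
    show "0 < K * (1 + C) ^ (m - 1) + 1" using C by linarith
    show "K * (1 + r) ^ (m - 1) \<le> r ^ m + (K * (1 + C) ^ (m - 1) + 1)" if "r \<ge> 0" for r
      using bound[OF that] by linarith
  qed
qed

lemma normally_elliptic_ge_1: "normally_elliptic J \<kappa> m p \<Longrightarrow> \<kappa> \<ge> 1"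
  by (simp add: normally_elliptic_def elliptic_def)

lemma principal_resolvent_right_halfplane:
  fixes p :: "('d::finite \<Rightarrow> nat) \<Rightarrow> ('a::banach \<Rightarrow>\<^sub>L 'a)" and \<xi> :: "real^'d"
  assumes p_hom: "\<forall>\<alpha>. mi_abs \<alpha> \<noteq> m \<longrightarrow> p \<alpha> = 0"
    and ell: "normally_elliptic J \<kappa> m p"
    and "\<xi> \<noteq> 0" and "0 \<le> Re z"
  shows "\<exists>R. is_inverse_op R (cscal J z + symb m p \<xi>) \<and> norm R \<le> \<kappa> / (norm \<xi> ^ m + cmod z)"
proof -
  define s where "s = norm \<xi> ^ m"
  have s: "s > 0" using \<open>\<xi> \<noteq> 0\<close> by (simp add: s_def)
  define \<eta> where "\<eta> = (1 / norm \<xi>) *\<^sub>R \<xi>"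
  have "norm \<eta> = 1" using \<open>\<xi> \<noteq> 0\<close> by (simp add: \<eta>_def)
  have "symb m p \<xi> = s *\<^sub>R symb m p \<eta>"
    using symb_scaleR_homogeneous[OF p_hom, of "norm \<xi>" \<eta>] \<open>\<xi> \<noteq> 0\<close> by (simp add: \<eta>_def s_def)
  then have factor: "cscal J z + symb m p \<xi> = s *\<^sub>R (cscal J (z / complex_of_real s) + symb m p \<eta>)"
    using s by (simp add: cscal_divide_of_real scaleR_add_right)
  have "z / complex_of_real s \<in> sector (pi / 2) 0"
    using s \<open>0 \<le> Re z\<close> by (simp add: sector_pi_half_iff Re_divide_of_real)
  with ell \<open>norm \<eta> = 1\<close> obtain S where S: "is_inverse_op S (cscal J (z / complex_of_real s) + symb m p \<eta>)"
    and norm_S: "norm S \<le> \<kappa> / (1 + cmod (z / complex_of_real s))"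
    unfolding normally_elliptic_def elliptic_def by fastforce
  have "norm ((1 / s) *\<^sub>R S) \<le> \<kappa> / (1 + cmod z / s) / s"
    using divide_right_mono[OF norm_S, of s] s by (simp add: norm_divide)
  also have "\<dots> = \<kappa> / (s + cmod z)"
  proof -
    have "(1 + cmod z / s) * s = s + cmod z" using s by (simp add: field_simps)
    then show ?thesis by (simp only: divide_divide_eq_left)
  qed
  finally have "norm ((1 / s) *\<^sub>R S) \<le> \<kappa> / (s + cmod z)" .
  moreover have "is_inverse_op ((1 / s) *\<^sub>R S) (cscal J z + symb m p \<xi>)"
    unfolding factor using is_inverse_op_scaleR[OF S] s by simp
  ultimately show ?thesis unfolding s_def by blast
qed

lemma principal_resolvent_at_zero:
  fixes p :: "('d::finite \<Rightarrow> nat) \<Rightarrow> ('a::banach \<Rightarrow>\<^sub>L 'a)"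
  assumes J: "complex_structure J" and "m \<ge> 1"
    and p_hom: "\<forall>\<alpha>. mi_abs \<alpha> \<noteq> m \<longrightarrow> p \<alpha> = 0" and "z \<noteq> 0"
  shows "is_inverse_op (cscal J (1 / z)) (cscal J z + symb m p 0) \<and> norm (cscal J (1 / z)) \<le> 1 / cmod z"
proof -
  have "symb m p 0 = 0"
    using symb_scaleR_homogeneous[OF p_hom, of 0 0] \<open>m \<ge> 1\<close> by (simp add: power_0_left)
  then show ?thesis
    using is_inverse_op_cscal[OF J \<open>z \<noteq> 0\<close>] norm_cscal_le[OF J, of "1 / z"] by (simp add: norm_divide)
qed

lemma principal_resolvent_left_shift:
  fixes p :: "('d::finite \<Rightarrow> nat) \<Rightarrow> ('a::banach \<Rightarrow>\<^sub>L 'a)" and \<xi> :: "real^'d"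
  assumes p_hom: "\<forall>\<alpha>. mi_abs \<alpha> \<noteq> m \<longrightarrow> p \<alpha> = 0"
    and ell: "normally_elliptic J \<kappa> m p" and "\<xi> \<noteq> 0" and "0 \<le> Re w"
    and u: "- \<gamma> * norm \<xi> ^ m \<le> u" "u \<le> 0" and "8 * \<gamma> * \<kappa> \<le> 1"
  shows "\<exists>R. is_inverse_op R (cscal J (w + complex_of_real u) + symb m p \<xi>) \<and>
           norm R \<le> 8 * \<kappa> / (7 * norm \<xi> ^ m + 7 * cmod w)"
proof -
  define s where "s = norm \<xi> ^ m"
  have s: "s > 0" using \<open>\<xi> \<noteq> 0\<close> by (simp add: s_def)
  have "\<kappa> > 0" using normally_elliptic_ge_1[OF ell] by simp
  obtain R0 where R0: "is_inverse_op R0 (cscal J w + symb m p \<xi>)"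
    and norm_R0: "norm R0 \<le> \<kappa> / (s + cmod w)"
    using principal_resolvent_right_halfplane[OF p_hom ell \<open>\<xi> \<noteq> 0\<close> \<open>0 \<le> Re w\<close>]
    unfolding s_def by blast
  have "norm (u *\<^sub>R (id_blinfun :: 'a \<Rightarrow>\<^sub>L 'a)) \<le> \<bar>u\<bar>"
    using norm_blinfun_id_le[where 'a='a] by (simp add: mult_left_le)
  then have "norm (u *\<^sub>R (id_blinfun :: 'a \<Rightarrow>\<^sub>L 'a)) * (\<kappa> / (s + cmod w)) \<le> (\<gamma> * s) * (\<kappa> / s)"
    using u s \<open>\<kappa> > 0\<close> by (intro mult_mono frac_le) (auto simp: s_def)
  also have "\<dots> \<le> 1 / 8" using s \<open>8 * \<gamma> * \<kappa> \<le> 1\<close> by simp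
  finally have small: "norm (u *\<^sub>R (id_blinfun :: 'a \<Rightarrow>\<^sub>L 'a)) * (\<kappa> / (s + cmod w)) \<le> 1 / 8" .
  have split: "cscal J (w + complex_of_real u) + symb m p \<xi> = cscal J w + symb m p \<xi> + u *\<^sub>R id_blinfun"
    by (simp add: cscal_add cscal_of_real algebra_simps)
  have "\<kappa> / (s + cmod w) / (1 - 1 / 8) = 8 * \<kappa> / (7 * s + 7 * cmod w)"
    by (simp add: field_simps)
  then show ?thesis
    using is_inverse_op_add_small[OF R0 norm_R0 small] unfolding split s_def by fastforce
qed

lemma principal_resolvent_shifted_halfplane:
  fixes p :: "('d::finite \<Rightarrow> nat) \<Rightarrow> ('a::banach \<Rightarrow>\<^sub>L 'a)" and \<xi> :: "real^'d"
  assumes J: "complex_structure J" and "m \<ge> 1"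
    and p_hom: "\<forall>\<alpha>. mi_abs \<alpha> \<noteq> m \<longrightarrow> p \<alpha> = 0"
    and ell: "normally_elliptic J \<kappa> m p"
    and "0 \<le> \<gamma>" and "8 * \<gamma> * \<kappa> \<le> 1"
    and re_z: "- \<gamma> * norm \<xi> ^ m \<le> Re z" and "\<xi> \<noteq> 0 \<or> z \<noteq> 0"
  shows "\<exists>R. is_inverse_op R (cscal J z + symb m p \<xi>) \<and>
           norm R \<le> 2 * \<kappa> / (norm \<xi> ^ m + cmod (z + complex_of_real (\<gamma> * norm \<xi> ^ m)))"
proof (cases "\<xi> = 0")
  case True
  then have "z \<noteq> 0" using \<open>\<xi> \<noteq> 0 \<or> z \<noteq> 0\<close> by simp
  moreover have "1 / cmod z \<le> 2 * \<kappa> / cmod z"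
    using normally_elliptic_ge_1[OF ell] by (simp add: divide_right_mono)
  ultimately show ?thesis
    using principal_resolvent_at_zero[OF J \<open>m \<ge> 1\<close> p_hom] True \<open>m \<ge> 1\<close>
    by (fastforce simp: power_0_left)
next
  case False
  define s where "s = norm \<xi> ^ m"
  have s: "s > 0" using False by (simp add: s_def)
  define u where "u = min (Re z) 0"
  define w where "w = z - complex_of_real u"
  have "0 \<le> \<gamma> * s" using \<open>0 \<le> \<gamma>\<close> s by simp
  then have u: "- \<gamma> * s \<le> u" "u \<le> 0" using re_z by (auto simp: u_def s_def)
  have "0 \<le> Re w" by (simp add: w_def u_def)
  from principal_resolvent_left_shift[OF p_hom ell False this u[unfolded s_def] \<open>8 * \<gamma> * \<kappa> \<le> 1\<close>]
  obtain R where R: "is_inverse_op R (cscal J z + symb m p \<xi>)"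
    and norm_R: "norm R \<le> 8 * \<kappa> / (7 * s + 7 * cmod w)"
    unfolding s_def by (auto simp: w_def)
  define D where "D = s + cmod (z + complex_of_real (\<gamma> * s))"
  have "cmod (z + complex_of_real (\<gamma> * s)) = cmod (w + complex_of_real (u + \<gamma> * s))"
    by (simp add: w_def)
  also have "\<dots> \<le> cmod w + \<gamma> * s" by (rule cmod_add_of_real_le) (use u in auto)
  finally have "D \<le> s + (cmod w + \<gamma> * s)" unfolding D_def by (rule add_left_mono)
  moreover have "8 * (\<gamma> * s) \<le> s"
    using mult_left_mono[OF normally_elliptic_ge_1[OF ell], of "8 * \<gamma>"] \<open>0 \<le> \<gamma>\<close>
      \<open>8 * \<gamma> * \<kappa> \<le> 1\<close> s mult_right_mono[of "8 * \<gamma>" 1 s]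
    by simp
  ultimately have "4 * D \<le> 7 * s + 7 * cmod w" using s norm_ge_zero[of w] by linarith
  moreover have "0 < D" using s by (simp add: D_def add_pos_nonneg)
  ultimately have "8 * \<kappa> / (7 * s + 7 * cmod w) \<le> 2 * \<kappa> / D"
    using normally_elliptic_ge_1[OF ell] by (simp add: frac_le_eq divide_simps)
  then show ?thesis using R norm_R unfolding D_def s_def by force
qed

lemma resolvent_lower_order_perturbation:
  fixes p b :: "('d::finite \<Rightarrow> nat) \<Rightarrow> ('a::banach \<Rightarrow>\<^sub>L 'a)" and \<xi> :: "real^'d"
  assumes J: "complex_structure J" and m: "m \<ge> 1"
    and p_hom: "\<forall>\<alpha>. mi_abs \<alpha> \<noteq> m \<longrightarrow> p \<alpha> = 0"
    and ell: "normally_elliptic J \<kappa> m p"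
    and \<gamma>: "0 \<le> \<gamma>" "8 * \<gamma> * \<kappa> \<le> 1"
    and b_low: "\<forall>\<alpha>. mi_abs \<alpha> \<ge> m \<longrightarrow> b \<alpha> = 0"
    and "0 < \<omega>" and b_small: "4 * \<kappa> * norm (symb (m - 1) b \<xi>) \<le> norm \<xi> ^ m + \<omega>"
    and re_z: "- \<gamma> * norm \<xi> ^ m + \<omega> \<le> Re z"
  shows "\<exists>S. is_inverse_op S (cscal J z + symb m (\<lambda>\<alpha>. p \<alpha> + b \<alpha>) \<xi>) \<and>
           norm S \<le> 4 * \<kappa> / (norm \<xi> ^ m + cmod (z + complex_of_real (\<gamma> * norm \<xi> ^ m)))"
proof -
  define D where "D = norm \<xi> ^ m + cmod (z + complex_of_real (\<gamma> * norm \<xi> ^ m))"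
  have "\<xi> \<noteq> 0 \<or> z \<noteq> 0" using re_z \<open>0 < \<omega>\<close> m by (auto simp: power_0_left)
  then obtain R where R: "is_inverse_op R (cscal J z + symb m p \<xi>)" and norm_R: "norm R \<le> 2 * \<kappa> / D"
    using principal_resolvent_shifted_halfplane[OF J m p_hom ell \<gamma>] re_z \<open>0 < \<omega>\<close>
    unfolding D_def by force
  have "norm \<xi> ^ m + \<omega> \<le> D"
    using complex_Re_le_cmod[of "z + complex_of_real (\<gamma> * norm \<xi> ^ m)"] re_z by (simp add: D_def)
  moreover have "0 < norm \<xi> ^ m + \<omega>" using \<open>0 < \<omega>\<close> by (simp add: add_nonneg_pos)
  ultimately have "norm (symb (m - 1) b \<xi>) * (2 * \<kappa> / D) \<le> 1 / 2"
    using b_small by (simp add: divide_simps ac_simps)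
  then obtain S where S: "is_inverse_op S (cscal J z + symb m p \<xi> + symb (m - 1) b \<xi>)"
    and "norm S \<le> 2 * \<kappa> / D / (1 - 1 / 2)"
    using is_inverse_op_add_small[OF R norm_R] by fastforce
  then have norm_S: "norm S \<le> 4 * \<kappa> / D" by simp
  have split: "cscal J z + symb m (\<lambda>\<alpha>. p \<alpha> + b \<alpha>) \<xi> = cscal J z + symb m p \<xi> + symb (m - 1) b \<xi>"
    by (simp only: symb_add_lower_order[OF m b_low] add.assoc)
  show ?thesis unfolding split using S norm_S unfolding D_def by blast
qed

lemma resolvent_estimate_uniform:
  fixes p :: "('d::finite \<Rightarrow> nat) \<Rightarrow> ('a::banach \<Rightarrow>\<^sub>L 'a)"
  assumes J: "complex_structure J" and m: "m \<ge> 1"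
    and p_hom: "\<forall>\<alpha>. mi_abs \<alpha> \<noteq> m \<longrightarrow> p \<alpha> = 0"
    and ell: "normally_elliptic J \<kappa> m p"
    and \<gamma>: "0 \<le> \<gamma>" "8 * \<gamma> * \<kappa> \<le> 1" and M: "4 * \<kappa> \<le> M"
  shows "\<exists>\<omega>>0. \<forall>b :: ('d \<Rightarrow> nat) \<Rightarrow> ('a \<Rightarrow>\<^sub>L 'a).
    (\<forall>\<alpha>. mi_abs \<alpha> \<ge> m \<longrightarrow> b \<alpha> = 0) \<longrightarrow> N0 (m - 1) (symb (m - 1) b) = c \<longrightarrow>
    (\<forall>(\<xi>::real^'d) z. z \<in> sector (pi / 2) (- \<gamma> * norm \<xi> ^ m + \<omega>) \<longrightarrow>
      (\<exists>S. is_inverse_op S (cscal J z + symb m (\<lambda>\<alpha>. p \<alpha> + b \<alpha>) \<xi>) \<and>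
        norm S \<le> M / (norm \<xi> ^ m + cmod (z + complex_of_real (\<gamma> * norm \<xi> ^ m)))))"
proof -
  have "\<kappa> \<ge> 1" by (rule normally_elliptic_ge_1[OF ell])
  then have "0 \<le> 4 * \<kappa> * max c 0" by simp
  from power_lower_degree_bound[OF m this] obtain \<omega> where "\<omega> > 0"
    and \<omega>: "\<forall>r\<ge>0. 4 * \<kappa> * max c 0 * (1 + r) ^ (m - 1) \<le> r ^ m + \<omega>"
    by blast
  have "\<exists>S. is_inverse_op S (cscal J z + symb m (\<lambda>\<alpha>. p \<alpha> + b \<alpha>) \<xi>) \<and>
      norm S \<le> M / (norm \<xi> ^ m + cmod (z + complex_of_real (\<gamma> * norm \<xi> ^ m)))"
    if b_low: "\<forall>\<alpha>. mi_abs \<alpha> \<ge> m \<longrightarrow> b \<alpha> = 0" and N0_b: "N0 (m - 1) (symb (m - 1) b) = c"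
      and z: "z \<in> sector (pi / 2) (- \<gamma> * norm \<xi> ^ m + \<omega>)"
    for b :: "('d \<Rightarrow> nat) \<Rightarrow> ('a \<Rightarrow>\<^sub>L 'a)" and \<xi> :: "real^'d" and z
  proof -
    have "norm (symb (m - 1) b \<xi>) \<le> c * (1 + norm \<xi>) ^ (m - 1)"
      using norm_symb_le_N0[of "m - 1" b \<xi>] N0_b by simp
    also have "\<dots> \<le> max c 0 * (1 + norm \<xi>) ^ (m - 1)" by (intro mult_right_mono) auto
    finally have "4 * \<kappa> * norm (symb (m - 1) b \<xi>) \<le> 4 * \<kappa> * max c 0 * (1 + norm \<xi>) ^ (m - 1)"
      using \<open>\<kappa> \<ge> 1\<close> by (simp add: mult.assoc)
    also have "\<dots> \<le> norm \<xi> ^ m + \<omega>" using \<omega> by simp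
    finally have b_small: "4 * \<kappa> * norm (symb (m - 1) b \<xi>) \<le> norm \<xi> ^ m + \<omega>" .
    have "- \<gamma> * norm \<xi> ^ m + \<omega> \<le> Re z" using z by (simp add: sector_pi_half_iff)
    from resolvent_lower_order_perturbation[OF J m p_hom ell \<gamma> b_low \<open>\<omega> > 0\<close> b_small this]
    obtain S where S: "is_inverse_op S (cscal J z + symb m (\<lambda>\<alpha>. p \<alpha> + b \<alpha>) \<xi>)"
      and norm_S: "norm S \<le> 4 * \<kappa> / (norm \<xi> ^ m + cmod (z + complex_of_real (\<gamma> * norm \<xi> ^ m)))"
      by blast
    have "4 * \<kappa> / (norm \<xi> ^ m + cmod (z + complex_of_real (\<gamma> * norm \<xi> ^ m)))
        \<le> M / (norm \<xi> ^ m + cmod (z + complex_of_real (\<gamma> * norm \<xi> ^ m)))"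
      using M by (simp add: divide_right_mono)
    then show ?thesis using S norm_S by (blast intro: order_trans)
  qed
  then show ?thesis using \<open>\<omega> > 0\<close> by blast
qed

theorem proposition4p3:
  fixes p :: "('d::finite \<Rightarrow> nat) \<Rightarrow> ('a::banach \<Rightarrow>\<^sub>L 'a)"
    and J :: "'a \<Rightarrow>\<^sub>L 'a" and m :: nat and \<kappa> :: real
  assumes J: "complex_structure J"
    and m: "m \<ge> 1"
    and p_lin: "\<forall>\<alpha>. clin_op J (p \<alpha>)"
    and p_hom: "\<forall>\<alpha>. mi_abs \<alpha> \<noteq> m \<longrightarrow> p \<alpha> = 0"
    and p_nz: "\<exists>\<alpha>. mi_abs \<alpha> = m \<and> p \<alpha> \<noteq> 0"
    and ell: "normally_elliptic J \<kappa> m p"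
  shows "\<exists>\<phi> \<gamma>. 0 < \<phi> \<and> \<phi> < pi \<and> 0 < \<gamma> \<and>
    (\<forall>c::real. \<exists>\<omega>>0. \<forall>b :: ('d \<Rightarrow> nat) \<Rightarrow> ('a \<Rightarrow>\<^sub>L 'a).
       (\<forall>\<alpha>. clin_op J (b \<alpha>)) \<longrightarrow> (\<forall>\<alpha>. mi_abs \<alpha> \<ge> m \<longrightarrow> b \<alpha> = 0) \<longrightarrow>
       N0 (m - 1) (symb (m - 1) b) = c \<longrightarrow>
       (\<forall>(\<xi>::real^'d) z. z \<in> sector \<phi> (- \<gamma> * norm \<xi> ^ m + \<omega>) \<longrightarrow>
          (\<exists>S. is_inverse_op S (cscal J z + symb m (\<lambda>\<alpha>. p \<alpha> + b \<alpha>) \<xi>) \<and>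
               norm S \<le> (4 * \<kappa> + 2) /
                 (norm \<xi> ^ m + cmod (z + complex_of_real (\<gamma> * norm \<xi> ^ m))))))"
proof -
  have "\<kappa> \<ge> 1" by (rule normally_elliptic_ge_1[OF ell])
  define \<gamma> where "\<gamma> = 1 / (8 * \<kappa>)"
  have \<gamma>: "0 < \<gamma>" "8 * \<gamma> * \<kappa> \<le> 1" using \<open>\<kappa> \<ge> 1\<close> by (simp_all add: \<gamma>_def)
  have "4 * \<kappa> \<le> 4 * \<kappa> + 2" by simp
  note uniform = resolvent_estimate_uniform[OF J m p_hom ell less_imp_le[OF \<gamma>(1)] \<gamma>(2) this]
  have "0 < pi / 2" "pi / 2 < pi" using pi_gt_zero by linarith+
  then show ?thesis using uniform \<gamma>(1) by meson
qed

end
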